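(* Let $\mathcal{S}$ be a state space equipped with a norm $\|\cdot\|$, let $\mathcal{A}$ be a bounded action set, let $f:\mathcal{S}\times\mathcal{A}\to\mathcal{S}$ be discrete-time dynamics $s_{t+1}=f(s_t,a_t)$, let $\ell:\mathcal{S}\to\mathbb{R}$ be a margin function, and let $\gamma\in[0,1)$ be a discount factor. Let $V:\mathcal{S}\to\mathbb{R}$ be the time-discounted Hamilton–Jacobi value function, i.e. $V$ satisfies, for all $s\in\mathcal{S}$, \[ V(s) = (1-\gamma)\,\ell(s) + \gamma \min\Big\{ \ell(s),\ \max_{a\in\mathcal{A}} V(f(s,a)) \Big\}. \] Suppose $\ell$ and $V$ are Lipschitz continuous with Lipschitz constants $L_\ell$ and $L_V$ respectively, and suppose $f(s,a)$ is uniformly Lipschitz in $s$ (uniformly over $a\in\mathcal{A}$) with constant $L_f$, where $\gamma L_f<1$. Then \[ L_V \le L_\ell \cdot \max\left\{1,\ \frac{1-\gamma}{1-\gamma L_f}\right\}. \]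
   Context: A function $g:\mathcal{S}\to\mathbb{R}$ is Lipschitz continuous if there is $L\ge 0$ with $|g(s)-g(\tilde s)|\le L\|s-\tilde s\|$ for all $s,\tilde s\in\mathcal{S}$; the smallest such $L$ is the Lipschitz constant of $g$. The margin function $\ell$ implicitly encodes the failure set $\{s : \ell(s)<0\}$. The maxima over $\mathcal{A}$ in the fixed-point equation are assumed to be attained. *)

theory Defs
  imports "HOL-Analysis.Analysis"
begin

text \<open>The Lipschitz constant of a function on the whole space: the smallest L \<ge> 0
  with L-lipschitz_on UNIV g (the infimum is attained, since the set is closed).\<close>
definition lipschitz_constant :: "('a::metric_space \<Rightarrow> 'b::metric_space) \<Rightarrow> real" where
  "lipschitz_constant g = Inf {L. L-lipschitz_on UNIV g}"

end

theory Submission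
  imports Defs
begin

text \<open>Taking minima and suprema does not increase Lipschitz constants, so the right-hand side
  of the fixed-point equation is Lipschitz with constant
  \<open>(1 - \<gamma>) L\<^sub>l + \<gamma> max L\<^sub>l (L\<^sub>V L\<^sub>f)\<close>.
  Hence \<open>L\<^sub>V\<close> is bounded by this expression, and solving for \<open>L\<^sub>V\<close> in the two cases of the
  maximum gives either \<open>L\<^sub>V \<le> L\<^sub>l\<close> or \<open>(1 - \<gamma> L\<^sub>f) L\<^sub>V \<le> (1 - \<gamma>) L\<^sub>l\<close>.\<close>

lemma lipschitz_on_lipschitz_constant:
  fixes g :: "'a::metric_space \<Rightarrow> 'b::metric_space"
  assumes "\<exists>L. L-lipschitz_on UNIV g"
  shows "(lipschitz_constant g)-lipschitz_on UNIV g"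
proof (rule lipschitz_onI)
  let ?S = "{L. L-lipschitz_on UNIV g}"
  have nonempty: "?S \<noteq> {}"
    using assms by auto
  show "0 \<le> lipschitz_constant g"
    unfolding lipschitz_constant_def using nonempty
    by (auto intro!: cInf_greatest dest: lipschitz_on_nonneg)
  fix x y :: 'a
  show "dist (g x) (g y) \<le> lipschitz_constant g * dist x y"
  proof (cases "x = y")
    case False
    then have pos: "dist x y > 0"
      by simp
    have "dist (g x) (g y) / dist x y \<le> lipschitz_constant g"
      unfolding lipschitz_constant_def
    proof (rule cInf_greatest[OF nonempty])
      fix L
      assume "L \<in> ?S"
      then have "dist (g x) (g y) \<le> L * dist x y"
        by (auto dest: lipschitz_onD)
      then show "dist (g x) (g y) / dist x y \<le> L"
        using pos by (simp add: divide_le_eq)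
    qed
    then show ?thesis
      using pos by (simp add: divide_le_eq)
  qed simp
qed

lemma lipschitz_constant_le:
  fixes g :: "'a::metric_space \<Rightarrow> 'b::metric_space"
  assumes "M-lipschitz_on UNIV g"
  shows "lipschitz_constant g \<le> M"
  unfolding lipschitz_constant_def
  using assms by (auto intro!: cInf_lower bdd_belowI[of _ 0] lipschitz_on_nonneg)

lemma abs_min_diff_le_max: "\<bar>min (a::real) b - min c d\<bar> \<le> max \<bar>a - c\<bar> \<bar>b - d\<bar>"
  by (simp add: min_def max_def abs_if)

lemma lipschitz_on_min:
  fixes f g :: "'a::metric_space \<Rightarrow> real"
  assumes f: "L-lipschitz_on U f" and g: "M-lipschitz_on U g"
  shows "(max L M)-lipschitz_on U (\<lambda>x. min (f x) (g x))"
proof (rule lipschitz_onI)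
  show "0 \<le> max L M"
    using lipschitz_on_nonneg[OF f] by simp
  fix x y
  assume xy: "x \<in> U" "y \<in> U"
  have "\<bar>f x - f y\<bar> \<le> max L M * dist x y"
    using lipschitz_onD[OF f xy] by (simp add: dist_real_def mult_right_mono order_trans)
  moreover have "\<bar>g x - g y\<bar> \<le> max L M * dist x y"
    using lipschitz_onD[OF g xy] by (simp add: dist_real_def mult_right_mono order_trans)
  ultimately have "max \<bar>f x - f y\<bar> \<bar>g x - g y\<bar> \<le> max L M * dist x y"
    by simp
  then show "dist (min (f x) (g x)) (min (f y) (g y)) \<le> max L M * dist x y"
    unfolding dist_real_def by (rule order_trans[OF abs_min_diff_le_max])
qed

lemma lipschitz_on_SUP:
  fixes g :: "'i \<Rightarrow> 'a::metric_space \<Rightarrow> real"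
  assumes lip: "\<And>i. i \<in> I \<Longrightarrow> L-lipschitz_on U (g i)"
    and nonempty: "I \<noteq> {}"
    and bdd: "\<And>x. x \<in> U \<Longrightarrow> bdd_above ((\<lambda>i. g i x) ` I)"
  shows "L-lipschitz_on U (\<lambda>x. SUP i\<in>I. g i x)"
proof (rule lipschitz_onI)
  obtain i0 where "i0 \<in> I"
    using nonempty by blast
  then show "0 \<le> L"
    using lip lipschitz_on_nonneg by blast
  have SUP_le: "(SUP i\<in>I. g i x) \<le> (SUP i\<in>I. g i y) + L * dist x y"
    if xy: "x \<in> U" "y \<in> U" for x y
  proof (rule cSUP_least[OF nonempty])
    fix i
    assume i: "i \<in> I"
    have "g i x \<le> g i y + L * dist x y"
      using lipschitz_onD[OF lip[OF i] xy] by (simp add: dist_real_def)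
    also have "g i y \<le> (SUP i\<in>I. g i y)"
      using cSUP_upper[OF i bdd[OF xy(2)]] .
    finally show "g i x \<le> (SUP i\<in>I. g i y) + L * dist x y"
      by simp
  qed
  fix x y
  assume "x \<in> U" "y \<in> U"
  then show "dist (SUP i\<in>I. g i x) (SUP i\<in>I. g i y) \<le> L * dist x y"
    using SUP_le[of x y] SUP_le[of y x] by (simp add: dist_real_def dist_commute)
qed

lemma le_discounted_max_imp_le:
  fixes LV Ll Lf \<gamma> :: real
  assumes "LV \<le> (1 - \<gamma>) * Ll + \<gamma> * max Ll (LV * Lf)"
    and "0 \<le> Ll" and "\<gamma> * Lf < 1"
  shows "LV \<le> Ll * max 1 ((1 - \<gamma>) / (1 - \<gamma> * Lf))"
proof (cases "LV * Lf \<le> Ll")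
  case True
  then have "LV \<le> Ll"
    using assms(1) by (simp add: max_def algebra_simps)
  also have "Ll \<le> Ll * max 1 ((1 - \<gamma>) / (1 - \<gamma> * Lf))"
    using assms(2) by (simp add: mult_le_cancel_left1)
  finally show ?thesis .
next
  case False
  then have "LV * (1 - \<gamma> * Lf) \<le> (1 - \<gamma>) * Ll"
    using assms(1) by (simp add: algebra_simps)
  then have "LV \<le> Ll * ((1 - \<gamma>) / (1 - \<gamma> * Lf))"
    using assms(3) by (simp add: field_simps)
  also have "\<dots> \<le> Ll * max 1 ((1 - \<gamma>) / (1 - \<gamma> * Lf))"
    using assms(2) by (intro mult_left_mono) auto
  finally show ?thesis .
qed

theorem theorem1:
  fixes f :: "'s::real_normed_vector \<Rightarrow> 'act::metric_space \<Rightarrow> 's"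
    and AA :: "'act set"
    and l V :: "'s \<Rightarrow> real"
    and \<gamma> L_f :: real
  assumes A_bounded: "bounded AA"
    and gamma: "0 \<le> \<gamma>" "\<gamma> < 1"
    and max_attained: "\<And>s. \<exists>a\<in>AA. \<forall>a'\<in>AA. V (f s a') \<le> V (f s a)"
    and fixpoint: "\<And>s. V s = (1 - \<gamma>) * l s + \<gamma> * min (l s) (SUP a\<in>AA. V (f s a))"
    and l_lip: "\<exists>L. L-lipschitz_on UNIV l"
    and V_lip: "\<exists>L. L-lipschitz_on UNIV V"
    and f_lip: "\<And>a. a \<in> AA \<Longrightarrow> L_f-lipschitz_on UNIV (\<lambda>s. f s a)"
    and gLf: "\<gamma> * L_f < 1"
  shows "lipschitz_constant V
           \<le> lipschitz_constant l * max 1 ((1 - \<gamma>) / (1 - \<gamma> * L_f))"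
proof -
  let ?Ll = "lipschitz_constant l" and ?LV = "lipschitz_constant V"
  have l_Ll: "?Ll-lipschitz_on UNIV l" and V_LV: "?LV-lipschitz_on UNIV V"
    using l_lip V_lip by (simp_all add: lipschitz_on_lipschitz_constant)
  have "(?LV * L_f)-lipschitz_on UNIV (\<lambda>s. V (f s a))" if "a \<in> AA" for a
    using lipschitz_on_compose2[OF f_lip[OF that] lipschitz_on_subset[OF V_LV]] by simp
  moreover have "AA \<noteq> {}" and "bdd_above ((\<lambda>a. V (f s a)) ` AA)" for s
    using max_attained[of s] by (auto intro: bdd_aboveI2)
  ultimately have "(?LV * L_f)-lipschitz_on UNIV (\<lambda>s. SUP a\<in>AA. V (f s a))"
    by (rule lipschitz_on_SUP)
  then have "((1 - \<gamma>) * ?Ll + \<gamma> * max ?Ll (?LV * L_f))-lipschitz_on UNIV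
      (\<lambda>s. (1 - \<gamma>) * l s + \<gamma> * min (l s) (SUP a\<in>AA. V (f s a)))"
    using gamma l_Ll by (intro lipschitz_on_add lipschitz_on_cmult_real_nonneg lipschitz_on_min) simp_all
  then have "((1 - \<gamma>) * ?Ll + \<gamma> * max ?Ll (?LV * L_f))-lipschitz_on UNIV V"
    by (simp flip: fixpoint)
  then have "?LV \<le> (1 - \<gamma>) * ?Ll + \<gamma> * max ?Ll (?LV * L_f)"
    by (rule lipschitz_constant_le)
  then show ?thesis
    using l_Ll gLf by (blast intro: le_discounted_max_imp_le lipschitz_on_nonneg)
qed

end
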